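(* For every $\bar y\in\mathcal P$ there exists a feasible assignment for $\bar y$, and if $\bar x$ is an optimal assignment w.r.t. $\bar y$ and $w'$, then $\mathrm{cost}_{w'}(\bar x,\bar y)\le T(\bar y)$.
   Context: Setting: $p\ge1$; a finite metric $d$ on $P\cup\mathcal F$; $f\ge0$; $w:P\to\mathbb{R}_{\ge0}$; matroid $\mathcal M$ on $\mathcal F$ with rank $r$. For demands $\omega$, $\mathrm{cost}_\omega(x,y)=\sum_u f(u)y_u+\sum_{v,u}\omega(v)d(v,u)^px_{vu}$; $\textsc{FacilityMatLP}(\omega,\mathcal M)$ minimizes it s.t. $\sum_u x_{vu}\ge1$, $\sum_{u\in S}y_u\le r(S)$ ($S\subseteq\mathcal F$), $0\le x_{vu}\le y_u$. Given $\bar y$, a feasible assignment is $x$ with $\sum_u x_{vu}\ge1$ and $0\le x_{vu}\le\bar y_u$; an optimal assignment minimizes $\sum_{v,u}\omega(v)d(v,u)^px_{vu}$ among these. $(x,y)$ is an optimal LP solution for $w$ with $\sum_u x_{vu}=1$; $\mathcal R(v)=(\sum_ud(v,u)^px_{vu})^{1/p}$. Client consolidation gives $w'$ (order clients by non-decreasing $\mathcal R$; for $i<j$, if $d(v_i,v_j)\le2^{(p+1)/p}\mathcal R(v_j)$ and $w'(v_i)>0$, move all of $w'(v_j)$ to $v_i$); $P'=\mathrm{supp}(w')$, $|P'|\ge2$. For $v\in P'$: $F(v)$ = facilities whose nearest client in $P'$ is $v$ (ties arbitrary, a partition of $\mathcal F$); $F'(v)=\{u\in F(v):d(u,v)\le2^{1/p}\mathcal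 R(v)\}$; $\gamma_v=\min_{u\notin F(v)}d(v,u)$; $G(v)=\{u\in F(v):d(v,u)\le\gamma_v\}$. $T(\bar y)=\sum_uf(u)\bar y_u+\sum_{v\in P'}w'(v)\big(\sum_{u\in G(v)}d(v,u)^p\bar y_u+3^p\gamma_v^p(1-\sum_{u\in G(v)}\bar y_u)\big)$. $\mathcal P=\{\bar y\in\mathbb{R}^{\mathcal F}_{\ge0}:\sum_{u\in S}\bar y_u\le r(S)\ \forall S\subseteq\mathcal F;\ \sum_{u\in F'(v)}\bar y_u\ge1/2\text{ and }\sum_{u\in G(v)}\bar y_u\le1\ \forall v\in P'\}$. *)

theory Defs
  imports Main "HOL-Library.Multiset" Complex_Main
begin

definition metric_on :: "'a set \<Rightarrow> ('a \<Rightarrow> 'a \<Rightarrow> real) \<Rightarrow> bool" where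
  "metric_on A d \<longleftrightarrow>
     (\<forall>a\<in>A. \<forall>b\<in>A. 0 \<le> d a b \<and> (d a b = 0 \<longleftrightarrow> a = b) \<and> d a b = d b a) \<and>
     (\<forall>a\<in>A. \<forall>b\<in>A. \<forall>c\<in>A. d a c \<le> d a b + d b c)"

definition matroid :: "'a set \<Rightarrow> ('a set \<Rightarrow> bool) \<Rightarrow> bool" where
  "matroid E indep \<longleftrightarrow>
     finite E \<and> (\<forall>X. indep X \<longrightarrow> X \<subseteq> E) \<and> indep {} \<and>
     (\<forall>X Y. indep X \<and> Y \<subseteq> X \<longrightarrow> indep Y) \<and>
     (\<forall>X Y. indep X \<and> indep Y \<and> card X < card Y \<longrightarrow> (\<exists>e\<in>Y - X. indep (insert e X)))"

definition mrank :: "('a set \<Rightarrow> bool) \<Rightarrow> 'a set \<Rightarrow> nat" where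
  "mrank indep S = Max {card X | X. X \<subseteq> S \<and> indep X}"

definition lp_cost ::
  "'a set \<Rightarrow> 'a set \<Rightarrow> ('a \<Rightarrow> 'a \<Rightarrow> real) \<Rightarrow> real \<Rightarrow> ('a \<Rightarrow> real) \<Rightarrow> ('a \<Rightarrow> real)
   \<Rightarrow> ('a \<Rightarrow> 'a \<Rightarrow> real) \<Rightarrow> ('a \<Rightarrow> real) \<Rightarrow> real" where
  "lp_cost P F d p f \<omega> x y =
     (\<Sum>u\<in>F. f u * y u) + (\<Sum>v\<in>P. \<Sum>u\<in>F. \<omega> v * d v u powr p * x v u)"

definition lp_feasible ::
  "'a set \<Rightarrow> 'a set \<Rightarrow> ('a set \<Rightarrow> nat) \<Rightarrow> ('a \<Rightarrow> 'a \<Rightarrow> real) \<Rightarrow> ('a \<Rightarrow> real) \<Rightarrow> bool" where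
  "lp_feasible P F r x y \<longleftrightarrow>
     (\<forall>v\<in>P. (\<Sum>u\<in>F. x v u) \<ge> 1) \<and>
     (\<forall>S. S \<subseteq> F \<longrightarrow> (\<Sum>u\<in>S. y u) \<le> real (r S)) \<and>
     (\<forall>v\<in>P. \<forall>u\<in>F. 0 \<le> x v u \<and> x v u \<le> y u)"

definition lp_optimal ::
  "'a set \<Rightarrow> 'a set \<Rightarrow> ('a \<Rightarrow> 'a \<Rightarrow> real) \<Rightarrow> real \<Rightarrow> ('a \<Rightarrow> real) \<Rightarrow> ('a \<Rightarrow> real)
   \<Rightarrow> ('a set \<Rightarrow> nat) \<Rightarrow> ('a \<Rightarrow> 'a \<Rightarrow> real) \<Rightarrow> ('a \<Rightarrow> real) \<Rightarrow> bool" where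
  "lp_optimal P F d p f \<omega> r x y \<longleftrightarrow>
     lp_feasible P F r x y \<and>
     (\<forall>x' y'. lp_feasible P F r x' y' \<longrightarrow> lp_cost P F d p f \<omega> x y \<le> lp_cost P F d p f \<omega> x' y')"

definition feasible_assign :: "'a set \<Rightarrow> 'a set \<Rightarrow> ('a \<Rightarrow> real) \<Rightarrow> ('a \<Rightarrow> 'a \<Rightarrow> real) \<Rightarrow> bool" where
  "feasible_assign P F yb x \<longleftrightarrow>
     (\<forall>v\<in>P. (\<Sum>u\<in>F. x v u) \<ge> 1) \<and> (\<forall>v\<in>P. \<forall>u\<in>F. 0 \<le> x v u \<and> x v u \<le> yb u)"

definition assign_cost ::
  "'a set \<Rightarrow> 'a set \<Rightarrow> ('a \<Rightarrow> 'a \<Rightarrow> real) \<Rightarrow> real \<Rightarrow> ('a \<Rightarrow> real) \<Rightarrow> ('a \<Rightarrow> 'a \<Rightarrow> real) \<Rightarrow> real" where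
  "assign_cost P F d p \<omega> x = (\<Sum>v\<in>P. \<Sum>u\<in>F. \<omega> v * d v u powr p * x v u)"

definition optimal_assign ::
  "'a set \<Rightarrow> 'a set \<Rightarrow> ('a \<Rightarrow> 'a \<Rightarrow> real) \<Rightarrow> real \<Rightarrow> ('a \<Rightarrow> real) \<Rightarrow> ('a \<Rightarrow> real)
   \<Rightarrow> ('a \<Rightarrow> 'a \<Rightarrow> real) \<Rightarrow> bool" where
  "optimal_assign P F d p \<omega> yb x \<longleftrightarrow>
     feasible_assign P F yb x \<and>
     (\<forall>x'. feasible_assign P F yb x' \<longrightarrow> assign_cost P F d p \<omega> x \<le> assign_cost P F d p \<omega> x')"

definition clientR :: "'a set \<Rightarrow> ('a \<Rightarrow> 'a \<Rightarrow> real) \<Rightarrow> real \<Rightarrow> ('a \<Rightarrow> 'a \<Rightarrow> real) \<Rightarrow> 'a \<Rightarrow> real" where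
  "clientR F d p x v = (\<Sum>u\<in>F. d v u powr p * x v u) powr (1 / p)"

definition consol_step ::
  "('a \<Rightarrow> 'a \<Rightarrow> real) \<Rightarrow> real \<Rightarrow> ('a \<Rightarrow> real) \<Rightarrow> 'a list \<Rightarrow> nat \<times> nat \<Rightarrow> ('a \<Rightarrow> real) \<Rightarrow> ('a \<Rightarrow> real)" where
  "consol_step d p R vs ij w' =
     (case ij of (i, j) \<Rightarrow>
       if d (vs ! i) (vs ! j) \<le> 2 powr ((p + 1) / p) * R (vs ! j) \<and> w' (vs ! i) > 0
       then w'(vs ! i := w' (vs ! i) + w' (vs ! j), vs ! j := 0)
       else w')"

definition consolidate ::
  "('a \<Rightarrow> 'a \<Rightarrow> real) \<Rightarrow> real \<Rightarrow> ('a \<Rightarrow> real) \<Rightarrow> 'a list \<Rightarrow> ('a \<Rightarrow> real) \<Rightarrow> ('a \<Rightarrow> real)" where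
  "consolidate d p R vs w =
     fold (consol_step d p R vs) [(i, j). j \<leftarrow> [0..<length vs], i \<leftarrow> [0..<j]] w"

definition Fprime :: "('a \<Rightarrow> 'a \<Rightarrow> real) \<Rightarrow> real \<Rightarrow> ('a \<Rightarrow> real) \<Rightarrow> ('a \<Rightarrow> 'a set) \<Rightarrow> 'a \<Rightarrow> 'a set" where
  "Fprime d p R Fp v = {u \<in> Fp v. d u v \<le> 2 powr (1 / p) * R v}"

definition gammav :: "'a set \<Rightarrow> ('a \<Rightarrow> 'a \<Rightarrow> real) \<Rightarrow> ('a \<Rightarrow> 'a set) \<Rightarrow> 'a \<Rightarrow> real" where
  "gammav F d Fp v = Min ((\<lambda>u. d v u) ` (F - Fp v))"

definition Gset :: "'a set \<Rightarrow> ('a \<Rightarrow> 'a \<Rightarrow> real) \<Rightarrow> ('a \<Rightarrow> 'a set) \<Rightarrow> 'a \<Rightarrow> 'a set" where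
  "Gset F d Fp v = {u \<in> Fp v. d v u \<le> gammav F d Fp v}"

definition T_bound ::
  "'a set \<Rightarrow> 'a set \<Rightarrow> ('a \<Rightarrow> 'a \<Rightarrow> real) \<Rightarrow> real \<Rightarrow> ('a \<Rightarrow> real) \<Rightarrow> ('a \<Rightarrow> real)
   \<Rightarrow> ('a \<Rightarrow> 'a set) \<Rightarrow> ('a \<Rightarrow> real) \<Rightarrow> real" where
  "T_bound P' F d p f w' Fp yb =
     (\<Sum>u\<in>F. f u * yb u) +
     (\<Sum>v\<in>P'. w' v * ((\<Sum>u\<in>Gset F d Fp v. d v u powr p * yb u) +
        3 powr p * gammav F d Fp v powr p * (1 - (\<Sum>u\<in>Gset F d Fp v. yb u))))"

definition in_polytope ::
  "'a set \<Rightarrow> 'a set \<Rightarrow> ('a \<Rightarrow> 'a \<Rightarrow> real) \<Rightarrow> real \<Rightarrow> ('a set \<Rightarrow> nat) \<Rightarrow> ('a \<Rightarrow> real)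
   \<Rightarrow> ('a \<Rightarrow> 'a set) \<Rightarrow> ('a \<Rightarrow> real) \<Rightarrow> bool" where
  "in_polytope P' F d p r R Fp yb \<longleftrightarrow>
     (\<forall>u\<in>F. 0 \<le> yb u) \<and>
     (\<forall>S. S \<subseteq> F \<longrightarrow> (\<Sum>u\<in>S. yb u) \<le> real (r S)) \<and>
     (\<forall>v\<in>P'. (\<Sum>u\<in>Fprime d p R Fp v. yb u) \<ge> 1 / 2 \<and> (\<Sum>u\<in>Gset F d Fp v. yb u) \<le> 1)"

end

theory Submission
  imports Defs
begin

text \<open>Consolidation leaves any two surviving clients a and b at distance more than
  2 * 2^(1/p) R(b).  Each surviving client v sees a neighbouring cell, that of the client v''
  owning the facility outside F(v) nearest to v; both radii 2^(1/p) R are below \<gamma>_v, so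
  F'(v) \<subseteq> G(v) and every facility of F'(v'') lies within 3\<gamma>_v of v.  Since F'(v'')
  carries mass at least 1/2, the mass missing from G(v) can be routed to F'(v'') at distance
  at most 3\<gamma>_v, which gives the per-client term of T.\<close>

lemma metric_on_subset: "metric_on A d \<Longrightarrow> B \<subseteq> A \<Longrightarrow> metric_on B d"
  unfolding metric_on_def by blast

lemma metric_on_sym: "metric_on A d \<Longrightarrow> a \<in> A \<Longrightarrow> b \<in> A \<Longrightarrow> d a b = d b a"
  unfolding metric_on_def by simp

lemma powr_succ_div: "p \<noteq> 0 \<Longrightarrow> 0 \<le> b \<Longrightarrow> (b::real) powr ((p + 1) / p) = b * b powr (1 / p)"
  by (cases "b = 0") (simp_all add: add_divide_distrib powr_add)

lemma card_ge_2_obtains_distinct: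
  assumes "2 \<le> card A"
  obtains a b where "a \<in> A" "b \<in> A" "a \<noteq> b"
proof -
  have "finite A" using assms card.infinite by fastforce
  obtain a where a: "a \<in> A" using assms by (metis card.empty ex_in_conv not_numeral_le_zero)
  have "1 \<le> card (A - {a})" using assms a \<open>finite A\<close> by (simp add: card_Diff_singleton)
  then obtain b where "b \<in> A - {a}" by (metis card.empty ex_in_conv not_one_le_zero)
  then show thesis using that a by blast
qed

lemma set_consolidation_pairs:
  "set [(i, j). j \<leftarrow> [0..<n], i \<leftarrow> [0..<j]] = {(i, j). i < j \<and> j < n}"
  by auto

lemma consol_step_keeps_zero: "g c = 0 \<Longrightarrow> consol_step d p R vs ij g c = 0"
  unfolding consol_step_def by (cases ij) auto

lemma fold_consol_step_keeps_zero: "g c = 0 \<Longrightarrow> fold (consol_step d p R vs) L g c = 0"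
  by (induction L arbitrary: g) (auto simp: consol_step_keeps_zero)

lemma fold_consol_step_nonneg:
  assumes "\<forall>v\<in>set vs. 0 \<le> g v" and "\<forall>(i, j)\<in>set L. i < length vs \<and> j < length vs"
  shows "\<forall>v\<in>set vs. 0 \<le> fold (consol_step d p R vs) L g v"
  using assms
proof (induction L arbitrary: g)
  case (Cons ij L)
  have "\<forall>v\<in>set vs. 0 \<le> consol_step d p R vs ij g v"
    using Cons.prems unfolding consol_step_def by (cases ij) (auto simp: nth_mem)
  with Cons show ?case by simp
qed simp

lemma consolidate_nonneg:
  assumes "\<forall>v\<in>set vs. 0 \<le> w v" and "v \<in> set vs"
  shows "0 \<le> consolidate d p R vs w v"
  using fold_consol_step_nonneg[OF assms(1)] assms(2) unfolding consolidate_def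
  by (simp add: set_consolidation_pairs)

lemma consolidate_survivors_far_apart:
  assumes ij: "i < j" "j < length vs" and w_nonneg: "\<forall>v\<in>set vs. 0 \<le> w v"
    and survive: "consolidate d p R vs w (vs ! i) \<noteq> 0" "consolidate d p R vs w (vs ! j) \<noteq> 0"
  shows "2 powr ((p + 1) / p) * R (vs ! j) < d (vs ! i) (vs ! j)"
proof -
  let ?L = "[(i, j). j \<leftarrow> [0..<length vs], i \<leftarrow> [0..<j]]"
  let ?step = "consol_step d p R vs"
  have "(i, j) \<in> set ?L" using ij by (simp only: set_consolidation_pairs) auto
  then obtain L1 L2 where L: "?L = L1 @ (i, j) # L2" by (meson split_list)
  define g where "g = fold ?step L1 w"
  have result: "consolidate d p R vs w = fold ?step L2 (?step (i, j) g)"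
    unfolding consolidate_def L g_def by simp
  have "set L1 \<subseteq> set ?L" unfolding L by auto
  also have "\<dots> = {(i, j). i < j \<and> j < length vs}" by (rule set_consolidation_pairs)
  finally have "\<forall>(i, j)\<in>set L1. i < length vs \<and> j < length vs" by auto
  then have "0 \<le> g (vs ! i)"
    using fold_consol_step_nonneg[OF w_nonneg] ij unfolding g_def by simp
  moreover have "g (vs ! i) \<noteq> 0"
  proof
    assume "g (vs ! i) = 0"
    then have "consolidate d p R vs w (vs ! i) = 0"
      unfolding result by (intro fold_consol_step_keeps_zero consol_step_keeps_zero)
    with survive(1) show False by contradiction
  qed
  moreover have "?step (i, j) g (vs ! j) \<noteq> 0"
  proof
    assume "?step (i, j) g (vs ! j) = 0"
    then have "consolidate d p R vs w (vs ! j) = 0"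
      unfolding result by (rule fold_consol_step_keeps_zero)
    with survive(2) show False by contradiction
  qed
  then have "\<not> (d (vs ! i) (vs ! j) \<le> 2 powr ((p + 1) / p) * R (vs ! j) \<and> 0 < g (vs ! i))"
    unfolding consol_step_def by auto
  ultimately show ?thesis by linarith
qed

lemma consolidate_survivors_separated:
  assumes sorted: "sorted_wrt (\<lambda>a b. R a \<le> R b) vs"
    and w_nonneg: "\<forall>v\<in>set vs. 0 \<le> w v"
    and d_sym: "\<forall>a\<in>set vs. \<forall>b\<in>set vs. d a b = d b a"
    and ab: "a \<in> set vs" "b \<in> set vs" "a \<noteq> b"
    and survive: "consolidate d p R vs w a \<noteq> 0" "consolidate d p R vs w b \<noteq> 0"
  shows "2 powr ((p + 1) / p) * R b < d a b"
proof -
  obtain i j where i: "i < length vs" "vs ! i = a" and j: "j < length vs" "vs ! j = b"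
    using ab by (metis in_set_conv_nth)
  have "i \<noteq> j" using i j ab by auto
  then consider "i < j" | "j < i" by linarith
  then show ?thesis
  proof cases
    case 1
    then show ?thesis using consolidate_survivors_far_apart[OF 1 j(1) w_nonneg] survive i j by simp
  next
    case 2
    \<comment> \<open>the later client a has the larger radius, so the bound at a implies the one at b\<close>
    have "2 powr ((p + 1) / p) * R a < d b a"
      using consolidate_survivors_far_apart[OF 2 i(1) w_nonneg] survive i j by simp
    moreover have "R b \<le> R a" using sorted_wrt_nth_less[OF sorted 2 i(1)] i j by simp
    then have "2 powr ((p + 1) / p) * R b \<le> 2 powr ((p + 1) / p) * R a"
      by (rule mult_left_mono) simp
    moreover have "d b a = d a b" using d_sym ab by blast
    ultimately show ?thesis by linarith
  qed
qed

lemma exists_unit_assignment_with_backup: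
  fixes G A :: "'a set" and yb \<delta> :: "'a \<Rightarrow> real" and D p :: real
  assumes "finite F" "G \<subseteq> F" "A \<subseteq> F" "G \<inter> A = {}"
    and yb_nonneg: "\<forall>u\<in>F. 0 \<le> yb u"
    and G_le: "(\<Sum>u\<in>G. yb u) \<le> 1" and cover: "1 \<le> (\<Sum>u\<in>G. yb u) + (\<Sum>u\<in>A. yb u)"
    and \<delta>_A: "\<forall>u\<in>A. 0 \<le> \<delta> u \<and> \<delta> u \<le> D" and "0 \<le> p"
  shows "\<exists>z. (\<forall>u\<in>F. 0 \<le> z u \<and> z u \<le> yb u) \<and> (\<Sum>u\<in>F. z u) = 1 \<and>
    (\<Sum>u\<in>F. \<delta> u powr p * z u) \<le> (\<Sum>u\<in>G. \<delta> u powr p * yb u) + D powr p * (1 - (\<Sum>u\<in>G. yb u))"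
proof -
  define s where "s = (\<Sum>u\<in>G. yb u)"
  define a where "a = (\<Sum>u\<in>A. yb u)"
  define c where "c = (1 - s) / a"
  have c_nonneg: "0 \<le> c" and c_le_1: "c \<le> 1"
    using G_le cover unfolding c_def s_def a_def by (auto simp: divide_le_eq_1)
  have ca: "c * a = 1 - s"
    using G_le cover unfolding c_def s_def a_def by (cases "a = 0") auto
  define z where "z u = (if u \<in> G then yb u else 0) + (if u \<in> A then c * yb u else 0)" for u
  have restrict: "(\<Sum>u\<in>F. if u \<in> B then h u else 0) = (\<Sum>u\<in>B. h u)"
    if "B \<subseteq> F" for B and h :: "'a \<Rightarrow> real"
    using sum.inter_restrict[OF \<open>finite F\<close>, of h B] that by (simp add: Int_absorb1)
  have sum_z: "(\<Sum>u\<in>F. h u * z u) = (\<Sum>u\<in>G. h u * yb u) + c * (\<Sum>u\<in>A. h u * yb u)"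
    for h :: "'a \<Rightarrow> real"
    unfolding z_def distrib_left sum.distrib if_distrib[of "(*) (h _)"] mult_zero_right
    using restrict[OF \<open>G \<subseteq> F\<close>] restrict[OF \<open>A \<subseteq> F\<close>]
    by (simp add: sum_distrib_left algebra_simps)
  have "(\<Sum>u\<in>A. \<delta> u powr p * yb u) \<le> D powr p * a"
    unfolding a_def sum_distrib_left
    using \<delta>_A yb_nonneg \<open>A \<subseteq> F\<close> \<open>0 \<le> p\<close>
    by (intro sum_mono mult_right_mono powr_mono2) auto
  then have "c * (\<Sum>u\<in>A. \<delta> u powr p * yb u) \<le> c * (D powr p * a)"
    using c_nonneg by (rule mult_left_mono)
  also have "\<dots> = D powr p * (1 - s)" by (metis ca mult.left_commute)
  finally have "(\<Sum>u\<in>F. \<delta> u powr p * z u) \<le> (\<Sum>u\<in>G. \<delta> u powr p * yb u) + D powr p * (1 - s)"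
    using sum_z[of "\<lambda>u. \<delta> u powr p"] by linarith
  moreover have "\<forall>u\<in>F. 0 \<le> z u \<and> z u \<le> yb u"
    using yb_nonneg c_nonneg c_le_1 \<open>G \<inter> A = {}\<close> mult_right_mono[OF c_le_1]
    unfolding z_def by fastforce
  moreover have "(\<Sum>u\<in>F. z u) = 1"
    using sum_z[of "\<lambda>_. 1"] ca unfolding s_def a_def by (simp add: mult.commute)
  ultimately show ?thesis unfolding s_def by blast
qed

definition T_client_cost ::
  "'a set \<Rightarrow> ('a \<Rightarrow> 'a \<Rightarrow> real) \<Rightarrow> real \<Rightarrow> ('a \<Rightarrow> 'a set) \<Rightarrow> ('a \<Rightarrow> real) \<Rightarrow> 'a \<Rightarrow> real" where
  "T_client_cost F d p Fp yb v = (\<Sum>u\<in>Gset F d Fp v. d v u powr p * yb u)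
     + 3 powr p * gammav F d Fp v powr p * (1 - (\<Sum>u\<in>Gset F d Fp v. yb u))"

lemma T_bound_eq:
  "T_bound P' F d p f w' Fp yb = (\<Sum>u\<in>F. f u * yb u) + (\<Sum>v\<in>P'. w' v * T_client_cost F d p Fp yb v)"
  unfolding T_bound_def T_client_cost_def ..

lemma lp_cost_eq:
  "lp_cost P F d p f \<omega> x y = (\<Sum>u\<in>F. f u * y u) + assign_cost P F d p \<omega> x"
  unfolding lp_cost_def assign_cost_def ..

lemma feasible_assign_of_clients:
  assumes "\<forall>v\<in>Q. (\<forall>u\<in>F. 0 \<le> Z v u \<and> Z v u \<le> yb u) \<and> (\<Sum>u\<in>F. Z v u) = 1"
    and "\<forall>u\<in>F. 0 \<le> yb u" and "1 \<le> (\<Sum>u\<in>F. yb u)"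
  shows "feasible_assign P F yb (\<lambda>v. if v \<in> Q then Z v else yb)"
  using assms unfolding feasible_assign_def by auto

lemma assign_cost_of_clients_le:
  assumes "finite P" "Q \<subseteq> P" and "\<forall>v\<in>P - Q. \<omega> v = 0" and "\<forall>v\<in>Q. 0 \<le> \<omega> v"
    and "\<forall>v\<in>Q. (\<Sum>u\<in>F. d v u powr p * Z v u) \<le> B v"
  shows "assign_cost P F d p \<omega> (\<lambda>v. if v \<in> Q then Z v else yb) \<le> (\<Sum>v\<in>Q. \<omega> v * B v)"
proof -
  have "assign_cost P F d p \<omega> (\<lambda>v. if v \<in> Q then Z v else yb)
      = (\<Sum>v\<in>Q. \<omega> v * (\<Sum>u\<in>F. d v u powr p * Z v u))"
    unfolding assign_cost_def using assms(1-3)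
    by (intro sum.mono_neutral_cong_right) (auto simp: sum_distrib_left mult.assoc)
  also have "\<dots> \<le> (\<Sum>v\<in>Q. \<omega> v * B v)"
    using assms(4,5) by (intro sum_mono mult_left_mono) auto
  finally show ?thesis .
qed

lemma Fprime_subset_cell: "Fprime d p R Fp v \<subseteq> Fp v"
  unfolding Fprime_def by auto

locale separated_cells =
  fixes P' F :: "'a set" and d :: "'a \<Rightarrow> 'a \<Rightarrow> real" and p :: real
    and R :: "'a \<Rightarrow> real" and Fp :: "'a \<Rightarrow> 'a set"
  assumes finite_F: "finite F"
    and metric: "metric_on (P' \<union> F) d"
    and cell_subset: "v \<in> P' \<Longrightarrow> Fp v \<subseteq> F"
    and cell_owner: "u \<in> F \<Longrightarrow> \<exists>!v. v \<in> P' \<and> u \<in> Fp v"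
    and cell_nearest: "\<lbrakk>v \<in> P'; u \<in> Fp v; v' \<in> P'\<rbrakk> \<Longrightarrow> d v u \<le> d v' u"
    and separated: "\<lbrakk>a \<in> P'; b \<in> P'; a \<noteq> b\<rbrakk> \<Longrightarrow> 2 * (2 powr (1 / p) * R b) < d a b"
begin

lemma dist_nonneg: "a \<in> P' \<union> F \<Longrightarrow> b \<in> P' \<union> F \<Longrightarrow> 0 \<le> d a b"
  and dist_sym: "a \<in> P' \<union> F \<Longrightarrow> b \<in> P' \<union> F \<Longrightarrow> d a b = d b a"
  and dist_triangle: "a \<in> P' \<union> F \<Longrightarrow> b \<in> P' \<union> F \<Longrightarrow> c \<in> P' \<union> F \<Longrightarrow> d a c \<le> d a b + d b c"
  using metric unfolding metric_on_def by simp_all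

lemma cells_disjoint:
  assumes "v \<in> P'" "v' \<in> P'" "u \<in> Fp v" "u \<in> Fp v'"
  shows "v = v'"
proof -
  have "u \<in> F" using cell_subset[OF assms(1)] assms(3) by (rule subsetD)
  then have owner: "\<exists>!c. c \<in> P' \<and> u \<in> Fp c" by (rule cell_owner)
  show ?thesis using the1_equality[OF owner, of v] the1_equality[OF owner, of v'] assms by simp
qed

lemma Fprime_subset: "v \<in> P' \<Longrightarrow> Fprime d p R Fp v \<subseteq> F"
  by (rule subset_trans[OF Fprime_subset_cell cell_subset])

lemma gammav_attained:
  assumes "F - Fp v \<noteq> {}"
  obtains u0 where "u0 \<in> F - Fp v" "d v u0 = gammav F d Fp v"
proof -
  have "gammav F d Fp v \<in> d v ` (F - Fp v)"
    unfolding gammav_def using assms finite_F by (intro Min_in) auto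
  then show thesis using that by (metis imageE)
qed

lemma exists_neighbour_cell:
  assumes v: "v \<in> P'" and "F - Fp v \<noteq> {}"
  obtains v'' where "v'' \<in> P'" "v'' \<noteq> v" "0 \<le> gammav F d Fp v"
    "Fprime d p R Fp v \<subseteq> Gset F d Fp v"
    "\<forall>u\<in>Fprime d p R Fp v''. d v u \<le> 3 * gammav F d Fp v"
proof -
  let ?\<gamma> = "gammav F d Fp v"
  obtain u0 where u0: "u0 \<in> F - Fp v" "d v u0 = ?\<gamma>"
    using gammav_attained[OF \<open>F - Fp v \<noteq> {}\<close>] .
  obtain v'' where v'': "v'' \<in> P'" "u0 \<in> Fp v''" using cell_owner u0 by blast
  have "v'' \<noteq> v" using v'' u0 by blast
  have in_space: "v \<in> P' \<union> F" "v'' \<in> P' \<union> F" "u0 \<in> P' \<union> F" using v v'' u0 by auto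
  have u0_v'': "d u0 v'' \<le> ?\<gamma>"
    using cell_nearest[OF v''(1,2) v] u0 dist_sym in_space by simp
  have "d v v'' \<le> 2 * ?\<gamma>"
    using dist_triangle[OF in_space(1,3,2)] u0_v'' u0 by linarith
  then have radius_v: "2 powr (1 / p) * R v < ?\<gamma>" and radius_v'': "2 powr (1 / p) * R v'' < ?\<gamma>"
    using separated[OF v''(1) v \<open>v'' \<noteq> v\<close>] separated[OF v v''(1) \<open>v'' \<noteq> v\<close>[symmetric]]
      dist_sym[OF in_space(1,2)] by linarith+
  have "0 \<le> ?\<gamma>" using u0 dist_nonneg in_space by metis
  moreover have "Fprime d p R Fp v \<subseteq> Gset F d Fp v"
    using radius_v cell_subset[OF v] dist_sym[OF in_space(1)]
    unfolding Fprime_def Gset_def by fastforce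
  moreover have "d v u \<le> 3 * ?\<gamma>" if u: "u \<in> Fprime d p R Fp v''" for u
  proof -
    have u_space: "u \<in> P' \<union> F" using Fprime_subset[OF v''(1)] u by auto
    have "d v'' u \<le> ?\<gamma>" using u radius_v'' dist_sym[OF u_space in_space(2)]
      unfolding Fprime_def by simp
    then show ?thesis
      using dist_triangle[OF in_space(1,3) u_space] dist_triangle[OF in_space(3,2) u_space]
        u0 u0_v'' by linarith
  qed
  ultimately show thesis using that v''(1) \<open>v'' \<noteq> v\<close> by blast
qed

lemma client_assignment:
  assumes v: "v \<in> P'" and other: "v' \<in> P'" "v' \<noteq> v"
    and yb_nonneg: "\<forall>u\<in>F. 0 \<le> yb u"
    and Fprime_half: "\<forall>c\<in>P'. 1 / 2 \<le> (\<Sum>u\<in>Fprime d p R Fp c. yb u)"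
    and G_le: "(\<Sum>u\<in>Gset F d Fp v. yb u) \<le> 1" and "0 \<le> p"
  shows "\<exists>z. (\<forall>u\<in>F. 0 \<le> z u \<and> z u \<le> yb u) \<and> (\<Sum>u\<in>F. z u) = 1 \<and>
    (\<Sum>u\<in>F. d v u powr p * z u) \<le> T_client_cost F d p Fp yb v"
proof -
  let ?G = "Gset F d Fp v" and ?\<gamma> = "gammav F d Fp v"
  have "Fprime d p R Fp v' \<noteq> {}" using Fprime_half other(1) by fastforce
  then obtain u1 where u1: "u1 \<in> Fprime d p R Fp v'" by blast
  then have "u1 \<notin> Fp v"
    using cells_disjoint[OF v other(1)] Fprime_subset_cell[of d p R Fp v'] other(2) by blast
  then have "F - Fp v \<noteq> {}" using u1 Fprime_subset[OF other(1)] by blast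
  then obtain v'' where v'': "v'' \<in> P'" "v'' \<noteq> v" "0 \<le> ?\<gamma>"
      "Fprime d p R Fp v \<subseteq> ?G" "\<forall>u\<in>Fprime d p R Fp v''. d v u \<le> 3 * ?\<gamma>"
    using exists_neighbour_cell[OF v] by blast
  have G_F: "?G \<subseteq> F" using cell_subset[OF v] unfolding Gset_def by auto
  have "(\<Sum>u\<in>Fprime d p R Fp v. yb u) \<le> (\<Sum>u\<in>?G. yb u)"
    using v''(4) G_F yb_nonneg finite_F by (intro sum_mono2) (auto intro: finite_subset)
  then have "1 \<le> (\<Sum>u\<in>?G. yb u) + (\<Sum>u\<in>Fprime d p R Fp v''. yb u)"
    using Fprime_half[rule_format, OF v] Fprime_half[rule_format, OF v''(1)] by linarith
  moreover have "?G \<inter> Fprime d p R Fp v'' = {}"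
    using cells_disjoint[OF v v''(1)] v''(2) Fprime_subset_cell[of d p R Fp v'']
    unfolding Gset_def by blast
  moreover have "\<forall>u\<in>Fprime d p R Fp v''. 0 \<le> d v u"
    using dist_nonneg v Fprime_subset[OF v''(1)] by blast
  ultimately show ?thesis
    using exists_unit_assignment_with_backup[OF finite_F G_F Fprime_subset[OF v''(1)] _
        yb_nonneg G_le, of "d v" "3 * ?\<gamma>" p] v''(3,5) \<open>0 \<le> p\<close>
    by (simp add: T_client_cost_def powr_mult)
qed

lemma total_mass_ge_one:
  fixes yb :: "'a \<Rightarrow> real"
  assumes "a \<in> P'" "b \<in> P'" "a \<noteq> b" and yb_nonneg: "\<forall>u\<in>F. 0 \<le> yb u"
    and Fprime_half: "\<forall>c\<in>P'. 1 / 2 \<le> (\<Sum>u\<in>Fprime d p R Fp c. yb u)"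
  shows "1 \<le> (\<Sum>u\<in>F. yb u)"
proof -
  let ?A = "Fprime d p R Fp a" and ?B = "Fprime d p R Fp b"
  have fin: "finite ?A" "finite ?B"
    using Fprime_subset assms(1,2) finite_F by (blast intro: finite_subset)+
  have "?A \<inter> ?B = {}"
    using cells_disjoint[OF assms(1,2)] Fprime_subset_cell[of d p R Fp a]
      Fprime_subset_cell[of d p R Fp b] assms(3) by blast
  then have "(\<Sum>u\<in>?A \<union> ?B. yb u) = (\<Sum>u\<in>?A. yb u) + (\<Sum>u\<in>?B. yb u)"
    by (rule sum.union_disjoint[OF fin])
  moreover have "(\<Sum>u\<in>?A \<union> ?B. yb u) \<le> (\<Sum>u\<in>F. yb u)"
    by (rule sum_mono2[OF finite_F]) (use Fprime_subset assms(1,2) yb_nonneg in auto)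
  ultimately show ?thesis
    using Fprime_half[rule_format, OF assms(1)] Fprime_half[rule_format, OF assms(2)] by linarith
qed

lemma exists_feasible_assign_le_T:
  assumes "finite P" "P' \<subseteq> P" "2 \<le> card P'"
    and yb_nonneg: "\<forall>u\<in>F. 0 \<le> yb u"
    and Fprime_half: "\<forall>c\<in>P'. 1 / 2 \<le> (\<Sum>u\<in>Fprime d p R Fp c. yb u)"
    and G_le: "\<forall>c\<in>P'. (\<Sum>u\<in>Gset F d Fp c. yb u) \<le> 1" and "0 \<le> p"
    and \<omega>: "\<forall>v\<in>P - P'. \<omega> v = 0" "\<forall>v\<in>P'. 0 \<le> \<omega> v"
  shows "\<exists>xs. feasible_assign P F yb xs \<and>
    assign_cost P F d p \<omega> xs \<le> (\<Sum>v\<in>P'. \<omega> v * T_client_cost F d p Fp yb v)"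
proof -
  obtain a b where ab: "a \<in> P'" "b \<in> P'" "a \<noteq> b"
    using card_ge_2_obtains_distinct[OF \<open>2 \<le> card P'\<close>] .
  have "\<forall>v\<in>P'. \<exists>z. ((\<forall>u\<in>F. 0 \<le> z u \<and> z u \<le> yb u) \<and> (\<Sum>u\<in>F. z u) = 1) \<and>
      (\<Sum>u\<in>F. d v u powr p * z u) \<le> T_client_cost F d p Fp yb v"
  proof
    fix v assume v: "v \<in> P'"
    obtain v' where "v' \<in> P'" "v' \<noteq> v" using ab by metis
    then show "\<exists>z. ((\<forall>u\<in>F. 0 \<le> z u \<and> z u \<le> yb u) \<and> (\<Sum>u\<in>F. z u) = 1) \<and>
        (\<Sum>u\<in>F. d v u powr p * z u) \<le> T_client_cost F d p Fp yb v"
      using client_assignment[OF v _ _ yb_nonneg Fprime_half G_le[rule_format, OF v] \<open>0 \<le> p\<close>]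
      by blast
  qed
  from bchoice[OF this] obtain Z
    where Z: "\<forall>v\<in>P'. (\<forall>u\<in>F. 0 \<le> Z v u \<and> Z v u \<le> yb u) \<and> (\<Sum>u\<in>F. Z v u) = 1"
      and Z_cost: "\<forall>v\<in>P'. (\<Sum>u\<in>F. d v u powr p * Z v u) \<le> T_client_cost F d p Fp yb v"
    by blast
  let ?xs = "\<lambda>v. if v \<in> P' then Z v else yb"
  have "feasible_assign P F yb ?xs"
    by (rule feasible_assign_of_clients[OF Z yb_nonneg total_mass_ge_one[OF ab yb_nonneg Fprime_half]])
  moreover have "assign_cost P F d p \<omega> ?xs \<le> (\<Sum>v\<in>P'. \<omega> v * T_client_cost F d p Fp yb v)"
    by (rule assign_cost_of_clients_le[OF assms(1,2) \<omega> Z_cost])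
  ultimately show ?thesis by blast
qed

end

lemma separated_cells_of_consolidation:
  fixes vs :: "'a list" and d :: "'a \<Rightarrow> 'a \<Rightarrow> real" and p :: real and R w :: "'a \<Rightarrow> real"
  defines "Q \<equiv> {v \<in> set vs. consolidate d p R vs w v \<noteq> 0}"
  assumes "1 \<le> p" "finite F" and metric: "metric_on (set vs \<union> F) d"
    and w_nonneg: "\<forall>v\<in>set vs. 0 \<le> w v" and sorted: "sorted_wrt (\<lambda>a b. R a \<le> R b) vs"
    and cells_sub: "\<forall>v\<in>Q. Fp v \<subseteq> F"
    and cells_owner: "\<forall>u\<in>F. \<exists>!v. v \<in> Q \<and> u \<in> Fp v"
    and cells_nearest: "\<forall>v\<in>Q. \<forall>u\<in>Fp v. \<forall>v'\<in>Q. d v u \<le> d v' u"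
  shows "separated_cells Q F d p R Fp"
proof
  show "finite F" by fact
  show "v \<in> Q \<Longrightarrow> Fp v \<subseteq> F" for v using cells_sub by blast
  show "u \<in> F \<Longrightarrow> \<exists>!v. v \<in> Q \<and> u \<in> Fp v" for u using cells_owner by (rule bspec)
  show "\<lbrakk>v \<in> Q; u \<in> Fp v; v' \<in> Q\<rbrakk> \<Longrightarrow> d v u \<le> d v' u" for v u v'
    using cells_nearest by blast
  show "metric_on (Q \<union> F) d" by (rule metric_on_subset[OF metric]) (auto simp: Q_def)
  have d_sym: "\<forall>a\<in>set vs. \<forall>b\<in>set vs. d a b = d b a"
    using metric_on_sym[OF metric] by simp
  show "2 * (2 powr (1 / p) * R b) < d a b" if "a \<in> Q" "b \<in> Q" "a \<noteq> b" for a b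
  proof -
    have "2 powr ((p + 1) / p) * R b < d a b"
      using consolidate_survivors_separated[OF sorted w_nonneg d_sym] that unfolding Q_def by auto
    then show ?thesis using powr_succ_div[of p 2] \<open>1 \<le> p\<close> by (simp add: mult.assoc)
  qed
qed

theorem mainTheorem14:
  fixes P F :: "'a set" and d :: "'a \<Rightarrow> 'a \<Rightarrow> real" and p :: real
    and f w :: "'a \<Rightarrow> real" and indep :: "'a set \<Rightarrow> bool"
    and x :: "'a \<Rightarrow> 'a \<Rightarrow> real" and y :: "'a \<Rightarrow> real"
    and vs :: "'a list" and Fp :: "'a \<Rightarrow> 'a set" and yb :: "'a \<Rightarrow> real"
  assumes p_ge: "p \<ge> 1"
    and finP: "finite P" and finF: "finite F"
    and metric: "metric_on (P \<union> F) d"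
    and f_nonneg: "\<forall>u\<in>F. f u \<ge> 0"
    and w_nonneg: "\<forall>v\<in>P. w v \<ge> 0"
    and mat: "matroid F indep"
    and lp_opt: "lp_optimal P F d p f w (mrank indep) x y"
    and x_sum: "\<forall>v\<in>P. (\<Sum>u\<in>F. x v u) = 1"
    and vs_enum: "distinct vs" "set vs = P"
    and vs_sorted: "sorted_wrt (\<lambda>a b. clientR F d p x a \<le> clientR F d p x b) vs"
  defines "w' \<equiv> consolidate d p (clientR F d p x) vs w"
    and "P' \<equiv> {v \<in> P. consolidate d p (clientR F d p x) vs w v \<noteq> 0}"
  assumes P'_card: "card P' \<ge> 2"
    and Fp_sub: "\<forall>v\<in>P'. Fp v \<subseteq> F"
    and Fp_part: "\<forall>u\<in>F. \<exists>!v. v \<in> P' \<and> u \<in> Fp v"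
    and Fp_nearest: "\<forall>v\<in>P'. \<forall>u\<in>Fp v. \<forall>v'\<in>P'. d v u \<le> d v' u"
    and yb_in: "in_polytope P' F d p (mrank indep) (clientR F d p x) Fp yb"
  shows "(\<exists>xb. feasible_assign P F yb xb) \<and>
         (\<forall>xb. optimal_assign P F d p w' yb xb \<longrightarrow>
                lp_cost P F d p f w' xb yb \<le> T_bound P' F d p f w' Fp yb)"
proof -
  \<comment> \<open>Neither the LP optimality of (x, y) nor the matroid enters: only the order of the
    clients by radius and the consolidation rule matter.\<close>
  have P'_eq: "P' = {v \<in> set vs. consolidate d p (clientR F d p x) vs w v \<noteq> 0}"
    unfolding P'_def vs_enum(2) ..
  have "separated_cells P' F d p (clientR F d p x) Fp"
    by (rule separated_cells_of_consolidation[where vs = vs and d = d and p = p and w = w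
          and R = "clientR F d p x" and F = F and Fp = Fp, folded P'_eq,
          OF p_ge finF metric[folded vs_enum(2)] w_nonneg[folded vs_enum(2)] vs_sorted
          Fp_sub Fp_part Fp_nearest])
  then interpret separated_cells P' F d p "clientR F d p x" Fp .
  have P'_sub: "P' \<subseteq> P" unfolding P'_def by blast
  have yb_nonneg: "\<forall>u\<in>F. 0 \<le> yb u"
    and Fprime_half: "\<forall>c\<in>P'. 1 / 2 \<le> (\<Sum>u\<in>Fprime d p (clientR F d p x) Fp c. yb u)"
    and G_le: "\<forall>c\<in>P'. (\<Sum>u\<in>Gset F d Fp c. yb u) \<le> 1"
    using yb_in unfolding in_polytope_def by blast+
  have w'_zero: "\<forall>v\<in>P - P'. w' v = 0" unfolding w'_def P'_def by blast
  have w'_nonneg: "\<forall>v\<in>P'. 0 \<le> w' v"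
    using consolidate_nonneg[OF w_nonneg[folded vs_enum(2)]] P'_sub vs_enum(2)
    unfolding w'_def by blast
  obtain xs where xs: "feasible_assign P F yb xs"
    "assign_cost P F d p w' xs \<le> (\<Sum>v\<in>P'. w' v * T_client_cost F d p Fp yb v)"
    using exists_feasible_assign_le_T[OF finP P'_sub P'_card yb_nonneg Fprime_half G_le
        order_trans[OF zero_le_one p_ge] w'_zero w'_nonneg]
    by blast
  have "lp_cost P F d p f w' xb yb \<le> T_bound P' F d p f w' Fp yb"
    if "optimal_assign P F d p w' yb xb" for xb
  proof -
    have "assign_cost P F d p w' xb \<le> assign_cost P F d p w' xs"
      using that xs(1) unfolding optimal_assign_def by blast
    then show ?thesis using xs(2) by (simp add: lp_cost_eq T_bound_eq)
  qed
  with xs(1) show ?thesis by blast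
qed

end
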